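(* Let $G$ be a finite connected groupoid with $G_0=\{e_1,\dots,e_r\}$, $A=\bigoplus_{i=1}^r A_i$ a unital ring with $A_i:=A_{e_i}$ having identity $1_i$, and $\alpha=(A_g,\alpha_g)_{g\in G}$ a unital partial action of $G$ on $A$. If there exists $a\in C(A)$ such that $t_i(a)=1_i$ for all $i=1,\dots,r$, then $A\subset A\star_\alpha G$ is a semisimple ring extension.
   Context: A groupoid $G$ is a small category in which every morphism is invertible; $G_0$ is its object set (objects identified with identity morphisms), $s,t$ source and target; $gh$ is defined iff $s(g)=t(h)$; $G(e,f)$ is the set of morphisms from $e$ to $f$; $G$ is connected if $G(e,f)\neq\emptyset$ for all $e,f\in G_0$. A unital partial action of $G$ on $A$ is a family $\alpha=(A_g,\alpha_g)_{g\in G}$ where $A_{t(g)}$ is a two-sided ideal of $A$, $A_g=A1_g$ is a two-sided ideal of $A_{t(g)}$ with $1_g$ a central idempotent of $A$, $\alpha_g:A_{g^{-1}}\to A_g$ a ring isomorphism, such that $\alpha_e=\mathrm{id}_{A_e}$ for $e\in G_0$, $\alpha_h^{-1}(A_{g^{-1}}\cap A_h)\subseteq A_{(gh)^{-1}}$ and $\alpha_g(\alpha_h(x))=\alpha_{gh}(x)$ for $x\in\alpha_h^{-1}(A_{g^{-1}}\cap A_h)$, whenever $s(g)=t(h)$. The partial skew groupoid ring $A\star_\alpha G=\bigoplus_{g\in G}A_g\delta_g$ has multiplication $(a_g\delta_g)(b_h\delta_h)=\alpha_g(\alpha_{g^{-1}}(a_g)b_h)\delta_{gh}$ if $s(g)=t(h)$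 and $0$ otherwise; it is unital with $1=\sum_{e\in G_0}1_e\delta_e$, and $A$ is regarded as a subring via $a\mapsto\sum_{e\in G_0}(a1_e)\delta_e$. Trace maps: $t_{i,j}(a)=\sum_{g\in G(e_i,e_j)}\alpha_g(a1_{g^{-1}})$ and $t_j(a)=\sum_{i=1}^r t_{i,j}(a)$. $C(A)$ is the center of $A$. A ring extension $R\subseteq S$ is semisimple if every exact sequence of left $S$-modules that splits as a sequence of left $R$-modules also splits as a sequence of left $S$-modules. *)

theory Defs
  imports Main "HOL-Algebra.Module"
begin

section \<open>Groupoids (objects identified with identity morphisms)\<close>

definition objs :: "'g set \<Rightarrow> ('g \<Rightarrow> 'g) \<Rightarrow> 'g set" where
  "objs G s = s ` G"

definition groupoid ::
  "'g set \<Rightarrow> ('g \<Rightarrow> 'g) \<Rightarrow> ('g \<Rightarrow> 'g) \<Rightarrow> ('g \<Rightarrow> 'g \<Rightarrow> 'g) \<Rightarrow> ('g \<Rightarrow> 'g) \<Rightarrow> bool" where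
  "groupoid G s t cmp gi \<longleftrightarrow>
     (\<forall>g\<in>G. s g \<in> G \<and> t g \<in> G \<and> s (s g) = s g \<and> t (s g) = s g
              \<and> s (t g) = t g \<and> t (t g) = t g) \<and>
     (\<forall>g\<in>G. \<forall>h\<in>G. s g = t h \<longrightarrow>
        cmp g h \<in> G \<and> s (cmp g h) = s h \<and> t (cmp g h) = t g) \<and>
     (\<forall>f\<in>G. \<forall>g\<in>G. \<forall>h\<in>G. s f = t g \<longrightarrow> s g = t h \<longrightarrow>
        cmp (cmp f g) h = cmp f (cmp g h)) \<and>
     (\<forall>g\<in>G. cmp (t g) g = g \<and> cmp g (s g) = g) \<and>
     (\<forall>g\<in>G. gi g \<in> G \<and> s (gi g) = t g \<and> t (gi g) = s g \<and>
              cmp g (gi g) = t g \<and> cmp (gi g) g = s g)"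

definition connected_groupoid ::
  "'g set \<Rightarrow> ('g \<Rightarrow> 'g) \<Rightarrow> ('g \<Rightarrow> 'g) \<Rightarrow> bool" where
  "connected_groupoid G s t \<longleftrightarrow>
     (\<forall>e\<in>objs G s. \<forall>f\<in>objs G s. \<exists>g\<in>G. s g = e \<and> t g = f)"

text \<open>u g plays the role of the central idempotent 1_g, and A_g = A 1_g.\<close>

definition Aid :: "('g \<Rightarrow> 'a::ring_1) \<Rightarrow> 'g \<Rightarrow> 'a set" where
  "Aid u g = {a * u g | a. True}"

definition unital_partial_action ::
  "'g set \<Rightarrow> ('g \<Rightarrow> 'g) \<Rightarrow> ('g \<Rightarrow> 'g) \<Rightarrow> ('g \<Rightarrow> 'g \<Rightarrow> 'g) \<Rightarrow> ('g \<Rightarrow> 'g)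
   \<Rightarrow> ('g \<Rightarrow> 'a::ring_1) \<Rightarrow> ('g \<Rightarrow> 'a \<Rightarrow> 'a) \<Rightarrow> bool" where
  "unital_partial_action G s t cmp gi u \<alpha> \<longleftrightarrow>
     (\<forall>g\<in>G. u g * u g = u g \<and> (\<forall>a. a * u g = u g * a)) \<and>
     (\<forall>g\<in>G. Aid u g \<subseteq> Aid u (t g)) \<and>
     (\<forall>g\<in>G. bij_betw (\<alpha> g) (Aid u (gi g)) (Aid u g) \<and>
        (\<forall>x\<in>Aid u (gi g). \<forall>y\<in>Aid u (gi g).
            \<alpha> g (x + y) = \<alpha> g x + \<alpha> g y \<and> \<alpha> g (x * y) = \<alpha> g x * \<alpha> g y)) \<and>
     (\<forall>e\<in>objs G s. \<forall>x\<in>Aid u e. \<alpha> e x = x) \<and>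
     (\<forall>g\<in>G. \<forall>h\<in>G. s g = t h \<longrightarrow>
        (\<forall>x\<in>Aid u (gi h). \<alpha> h x \<in> Aid u (gi g) \<longrightarrow>
            x \<in> Aid u (gi (cmp g h)) \<and> \<alpha> g (\<alpha> h x) = \<alpha> (cmp g h) x))"

definition direct_sum_objs :: "'g set \<Rightarrow> ('g \<Rightarrow> 'g) \<Rightarrow> ('g \<Rightarrow> 'a::ring_1) \<Rightarrow> bool" where
  "direct_sum_objs G s u \<longleftrightarrow>
     (\<Sum>e\<in>objs G s. u e) = 1 \<and>
     (\<forall>e\<in>objs G s. \<forall>f\<in>objs G s. e \<noteq> f \<longrightarrow> u e * u f = 0)"

definition trace_ij ::
  "'g set \<Rightarrow> ('g \<Rightarrow> 'g) \<Rightarrow> ('g \<Rightarrow> 'g) \<Rightarrow> ('g \<Rightarrow> 'g)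
   \<Rightarrow> ('g \<Rightarrow> 'a::ring_1) \<Rightarrow> ('g \<Rightarrow> 'a \<Rightarrow> 'a) \<Rightarrow> 'g \<Rightarrow> 'g \<Rightarrow> 'a \<Rightarrow> 'a" where
  "trace_ij G s t gi u \<alpha> ei ej a =
     (\<Sum>g\<in>{g\<in>G. s g = ei \<and> t g = ej}. \<alpha> g (a * u (gi g)))"

definition trace_j ::
  "'g set \<Rightarrow> ('g \<Rightarrow> 'g) \<Rightarrow> ('g \<Rightarrow> 'g) \<Rightarrow> ('g \<Rightarrow> 'g)
   \<Rightarrow> ('g \<Rightarrow> 'a::ring_1) \<Rightarrow> ('g \<Rightarrow> 'a \<Rightarrow> 'a) \<Rightarrow> 'g \<Rightarrow> 'a \<Rightarrow> 'a" where
  "trace_j G s t gi u \<alpha> ej a = (\<Sum>ei\<in>objs G s. trace_ij G s t gi u \<alpha> ei ej a)"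

text \<open>Elements of A \<star>_\<alpha> G are functions x with x g \<in> A_g for g \<in> G and
  x g = 0 otherwise (x stands for the sum of x g \<delta>_g).\<close>

definition skew_ring ::
  "'g set \<Rightarrow> ('g \<Rightarrow> 'g) \<Rightarrow> ('g \<Rightarrow> 'g) \<Rightarrow> ('g \<Rightarrow> 'g \<Rightarrow> 'g) \<Rightarrow> ('g \<Rightarrow> 'g)
   \<Rightarrow> ('g \<Rightarrow> 'a::ring_1) \<Rightarrow> ('g \<Rightarrow> 'a \<Rightarrow> 'a) \<Rightarrow> ('g \<Rightarrow> 'a) ring" where
  "skew_ring G s t cmp gi u \<alpha> =
     \<lparr> carrier = {x. \<forall>g. (g \<in> G \<longrightarrow> x g \<in> Aid u g) \<and> (g \<notin> G \<longrightarrow> x g = 0)},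
       mult = (\<lambda>x y k. \<Sum>(g, h)\<in>{(g, h) \<in> G \<times> G. s g = t h \<and> cmp g h = k}.
                          \<alpha> g (\<alpha> (gi g) (x g) * y h)),
       one = (\<lambda>g. if g \<in> objs G s then u g else 0),
       zero = (\<lambda>g. 0),
       add = (\<lambda>x y g. x g + y g) \<rparr>"

definition skew_emb ::
  "'g set \<Rightarrow> ('g \<Rightarrow> 'g) \<Rightarrow> ('g \<Rightarrow> 'a::ring_1) \<Rightarrow> 'a \<Rightarrow> ('g \<Rightarrow> 'a)" where
  "skew_emb G s u a = (\<lambda>g. if g \<in> objs G s then a * u g else 0)"

definition left_module :: "('r, 'x) ring_scheme \<Rightarrow> ('r, 'm) module \<Rightarrow> bool" where
  "left_module R M \<longleftrightarrow> abelian_group M \<and>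
     (\<forall>r\<in>carrier R. \<forall>x\<in>carrier M. smult M r x \<in> carrier M) \<and>
     (\<forall>r\<in>carrier R. \<forall>r'\<in>carrier R. \<forall>x\<in>carrier M.
        smult M (add R r r') x = add M (smult M r x) (smult M r' x)) \<and>
     (\<forall>r\<in>carrier R. \<forall>x\<in>carrier M. \<forall>y\<in>carrier M.
        smult M r (add M x y) = add M (smult M r x) (smult M r y)) \<and>
     (\<forall>r\<in>carrier R. \<forall>r'\<in>carrier R. \<forall>x\<in>carrier M.
        smult M (mult R r r') x = smult M r (smult M r' x)) \<and>
     (\<forall>x\<in>carrier M. smult M (one R) x = x)"

definition lin_map :: "'r set \<Rightarrow> ('r, 'm) module \<Rightarrow> ('r, 'n) module \<Rightarrow> ('m \<Rightarrow> 'n) \<Rightarrow> bool" where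
  "lin_map T M N f \<longleftrightarrow> f \<in> carrier M \<rightarrow> carrier N \<and>
     (\<forall>x\<in>carrier M. \<forall>y\<in>carrier M. f (add M x y) = add N (f x) (f y)) \<and>
     (\<forall>r\<in>T. \<forall>x\<in>carrier M. f (smult M r x) = smult N r (f x))"

definition short_exact ::
  "('r, 'x) ring_scheme \<Rightarrow> ('r, 'm1) module \<Rightarrow> ('r, 'm2) module \<Rightarrow> ('r, 'm3) module
   \<Rightarrow> ('m1 \<Rightarrow> 'm2) \<Rightarrow> ('m2 \<Rightarrow> 'm3) \<Rightarrow> bool" where
  "short_exact R M1 M2 M3 f g \<longleftrightarrow>
     left_module R M1 \<and> left_module R M2 \<and> left_module R M3 \<and>
     lin_map (carrier R) M1 M2 f \<and> lin_map (carrier R) M2 M3 g \<and>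
     inj_on f (carrier M1) \<and>
     f ` carrier M1 = {y \<in> carrier M2. g y = zero M3} \<and>
     g ` carrier M2 = carrier M3"

definition splits_wrt :: "'r set \<Rightarrow> ('r, 'm2) module \<Rightarrow> ('r, 'm3) module \<Rightarrow> ('m2 \<Rightarrow> 'm3) \<Rightarrow> bool" where
  "splits_wrt T M2 M3 g \<longleftrightarrow> (\<exists>h. lin_map T M3 M2 h \<and> (\<forall>z\<in>carrier M3. g (h z) = z))"

text \<open>Semisimplicity condition of the extension \<phi>(R) \<subseteq> S, instantiated at
  modules M1, M2, M3 (the theorem quantifies over all of them and all types):
  an exact sequence of left S-modules which splits as a sequence of left
  R-modules (scalars restricted along \<phi>) splits as a sequence of S-modules.\<close>

definition semisimple_ext_at ::
  "('r, 'x) ring_scheme \<Rightarrow> 'r set \<Rightarrow> ('r, 'm1) module \<Rightarrow> ('r, 'm2) module \<Rightarrow> ('r, 'm3) module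
   \<Rightarrow> ('m1 \<Rightarrow> 'm2) \<Rightarrow> ('m2 \<Rightarrow> 'm3) \<Rightarrow> bool" where
  "semisimple_ext_at S Rimg M1 M2 M3 f g \<longleftrightarrow>
     (short_exact S M1 M2 M3 f g \<and> splits_wrt Rimg M2 M3 g \<longrightarrow>
        splits_wrt (carrier S) M2 M3 g)"

end

theory Submission
  imports Defs
begin

text \<open>Write \<open>S = A \<star>_\<alpha> G\<close>. The elements \<open>x_g = 1_g \<delta>_g\<close> and \<open>y_g = a 1_{g^{-1}} \<delta>_{g^{-1}}\<close>
  satisfy \<open>\<Sum>_g x_g y_g = \<Sum>_e t_e(a) \<delta>_e = 1\<close>, and for every \<open>r \<in> S\<close> there are
  coefficients \<open>\<beta>_\<rho>_g \<in> A\<close> with \<open>r x_g = \<Sum>_\<rho> x_\<rho> \<beta>_\<rho>_g\<close> and \<open>y_\<rho> r = \<Sum>_g \<beta>_\<rho>_g y_g\<close>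
  (this uses that \<open>a\<close> is central), so \<open>\<Sum>_g x_g \<otimes> y_g\<close> is a separability idempotent
  of \<open>S\<close> over \<open>A\<close>. Maschke's averaging \<open>z \<mapsto> \<Sum>_g x_g h(y_g z)\<close> then turns an
  \<open>A\<close>-linear section \<open>h\<close> of an \<open>S\<close>-linear epimorphism into an \<open>S\<close>-linear one.\<close>

section \<open>Maschke averaging\<close>

lemma additive_zero:
  assumes "abelian_group M" "abelian_group N" "f \<in> carrier M \<rightarrow> carrier N"
    and "\<forall>x\<in>carrier M. \<forall>y\<in>carrier M. f (add M x y) = add N (f x) (f y)"
  shows "f (zero M) = zero N"
proof -
  interpret M: abelian_group M by fact
  interpret N: abelian_group N by fact
  have "f (zero M) = add N (f (zero M)) (f (zero M))"
    using assms(4) by (metis M.zero_closed M.l_zero)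
  then show ?thesis
    using assms(3) by (metis M.zero_closed N.add.l_cancel_one' N.zero_closed N.r_zero Pi_mem)
qed

lemma additive_finsum:
  assumes "abelian_group M" "abelian_group N" "f \<in> carrier M \<rightarrow> carrier N"
    and "\<forall>x\<in>carrier M. \<forall>y\<in>carrier M. f (add M x y) = add N (f x) (f y)"
    and "finite I" "\<phi> \<in> I \<rightarrow> carrier M"
  shows "f (finsum M \<phi> I) = finsum N (\<lambda>i. f (\<phi> i)) I"
  using assms(5,6)
proof (induction I rule: finite_induct)
  case empty
  interpret M: abelian_group M by fact
  interpret N: abelian_group N by fact
  show ?case using additive_zero[OF assms(1-4)] by simp
next
  case (insert i I)
  interpret M: abelian_group M by fact
  interpret N: abelian_group N by fact
  have \<phi>: "\<phi> \<in> I \<rightarrow> carrier M" "\<phi> i \<in> carrier M" using insert by auto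
  have "f (finsum M \<phi> (insert i I)) = add N (f (\<phi> i)) (f (finsum M \<phi> I))"
    using insert \<phi> assms(4) by (simp add: M.finsum_insert)
  then show ?case
    using insert \<phi> assms(3) by (subst N.finsum_insert) (auto simp: Pi_def)
qed

lemma (in abelian_group) finsum_swap:
  assumes "finite I" "finite J" "\<And>i j. i \<in> I \<Longrightarrow> j \<in> J \<Longrightarrow> f i j \<in> carrier G"
  shows "(\<Oplus>i\<in>I. \<Oplus>j\<in>J. f i j) = (\<Oplus>j\<in>J. \<Oplus>i\<in>I. f i j)"
  using assms(1,3)
proof (induction I rule: finite_induct)
  case empty
  then show ?case by simp
next
  case (insert i I)
  then have "(\<Oplus>k\<in>insert i I. \<Oplus>j\<in>J. f k j) = (\<Oplus>j\<in>J. f i j) \<oplus> (\<Oplus>j\<in>J. \<Oplus>k\<in>I. f k j)"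
    by (simp add: Pi_def)
  also have "\<dots> = (\<Oplus>j\<in>J. f i j \<oplus> (\<Oplus>k\<in>I. f k j))"
    using insert by (subst finsum_addf) (auto simp: Pi_def)
  also have "\<dots> = (\<Oplus>j\<in>J. \<Oplus>k\<in>insert i I. f k j)"
    using insert by (intro finsum_cong') (auto simp: Pi_def finsum_insert)
  finally show ?case .
qed

lemma left_module_abelian_group: "left_module R M \<Longrightarrow> abelian_group M"
  by (simp add: left_module_def)

lemma left_module_smult_closed:
  "left_module R M \<Longrightarrow> r \<in> carrier R \<Longrightarrow> x \<in> carrier M \<Longrightarrow> smult M r x \<in> carrier M"
  by (simp add: left_module_def)

lemma left_module_smult_add:
  "left_module R M \<Longrightarrow> r \<in> carrier R \<Longrightarrow> x \<in> carrier M \<Longrightarrow> y \<in> carrier M \<Longrightarrow>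
     smult M r (add M x y) = add M (smult M r x) (smult M r y)"
  by (simp add: left_module_def)

lemma left_module_add_smult:
  "left_module R M \<Longrightarrow> r \<in> carrier R \<Longrightarrow> r' \<in> carrier R \<Longrightarrow> x \<in> carrier M \<Longrightarrow>
     smult M (add R r r') x = add M (smult M r x) (smult M r' x)"
  by (simp add: left_module_def)

lemma left_module_smult_assoc:
  "left_module R M \<Longrightarrow> r \<in> carrier R \<Longrightarrow> r' \<in> carrier R \<Longrightarrow> x \<in> carrier M \<Longrightarrow>
     smult M (mult R r r') x = smult M r (smult M r' x)"
  by (simp add: left_module_def)

lemma left_module_smult_one: "left_module R M \<Longrightarrow> x \<in> carrier M \<Longrightarrow> smult M (one R) x = x"
  by (simp add: left_module_def)

lemma left_module_smult_finsum:
  assumes "left_module R M" "r \<in> carrier R" "finite I" "\<phi> \<in> I \<rightarrow> carrier M"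
  shows "smult M r (finsum M \<phi> I) = finsum M (\<lambda>i. smult M r (\<phi> i)) I"
  using assms by (intro additive_finsum left_module_abelian_group)
    (auto intro: left_module_smult_closed left_module_smult_add)

text \<open>The relations for \<open>X\<close>, \<open>Y\<close> and \<open>B\<close> are only required after acting on the
  modules, so \<open>S\<close> need not be known to be a ring.\<close>

locale averaging =
  fixes S :: "('r, 'x) ring_scheme" and T :: "'r set"
    and M2 :: "('r, 'm2) module" and M3 :: "('r, 'm3) module"
    and p :: "'m2 \<Rightarrow> 'm3" and h :: "'m3 \<Rightarrow> 'm2"
    and I :: "'i set" and X Y :: "'i \<Rightarrow> 'r" and B :: "'r \<Rightarrow> 'i \<Rightarrow> 'i \<Rightarrow> 'r"
  assumes M2: "left_module S M2" and M3: "left_module S M3"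
    and p_lin: "lin_map (carrier S) M2 M3 p"
    and h_lin: "lin_map T M3 M2 h" and p_h: "\<And>z. z \<in> carrier M3 \<Longrightarrow> p (h z) = z"
    and T_sub: "T \<subseteq> carrier S" and fin_I: "finite I"
    and X: "\<And>i. i \<in> I \<Longrightarrow> X i \<in> carrier S" and Y: "\<And>i. i \<in> I \<Longrightarrow> Y i \<in> carrier S"
    and B: "\<And>r i j. r \<in> carrier S \<Longrightarrow> B r j i \<in> T"
    and sum_XY: "\<And>z. z \<in> carrier M3 \<Longrightarrow> finsum M3 (\<lambda>i. smult M3 (mult S (X i) (Y i)) z) I = z"
    and mult_X: "\<And>r i m. r \<in> carrier S \<Longrightarrow> i \<in> I \<Longrightarrow> m \<in> carrier M2 \<Longrightarrow>
       smult M2 (mult S r (X i)) m = finsum M2 (\<lambda>j. smult M2 (mult S (X j) (B r j i)) m) I"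
    and Y_mult: "\<And>r j z. r \<in> carrier S \<Longrightarrow> j \<in> I \<Longrightarrow> z \<in> carrier M3 \<Longrightarrow>
       smult M3 (mult S (Y j) r) z = finsum M3 (\<lambda>i. smult M3 (mult S (B r j i) (Y i)) z) I"
begin

sublocale M2: abelian_group M2 using M2 by (rule left_module_abelian_group)
sublocale M3: abelian_group M3 using M3 by (rule left_module_abelian_group)

lemma h_closed: "z \<in> carrier M3 \<Longrightarrow> h z \<in> carrier M2"
  using h_lin by (auto simp: lin_map_def)

lemma h_add: "\<forall>x\<in>carrier M3. \<forall>y\<in>carrier M3. h (add M3 x y) = add M2 (h x) (h y)"
  using h_lin by (simp add: lin_map_def)

lemma h_smult: "r \<in> T \<Longrightarrow> z \<in> carrier M3 \<Longrightarrow> h (smult M3 r z) = smult M2 r (h z)"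
  using h_lin by (simp add: lin_map_def)

lemma h_finsum: "finite J \<Longrightarrow> \<phi> \<in> J \<rightarrow> carrier M3 \<Longrightarrow> h (finsum M3 \<phi> J) = finsum M2 (\<lambda>i. h (\<phi> i)) J"
  using h_lin M2 M3 by (intro additive_finsum left_module_abelian_group) (auto simp: lin_map_def)

lemma p_finsum: "finite J \<Longrightarrow> \<phi> \<in> J \<rightarrow> carrier M2 \<Longrightarrow> p (finsum M2 \<phi> J) = finsum M3 (\<lambda>i. p (\<phi> i)) J"
  using p_lin M2 M3 by (intro additive_finsum left_module_abelian_group) (auto simp: lin_map_def)

lemma p_smult: "r \<in> carrier S \<Longrightarrow> m \<in> carrier M2 \<Longrightarrow> p (smult M2 r m) = smult M3 r (p m)"
  using p_lin by (simp add: lin_map_def)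

definition avg :: "'m3 \<Rightarrow> 'm2" where
  "avg z = finsum M2 (\<lambda>i. smult M2 (X i) (h (smult M3 (Y i) z))) I"

lemma avg_term_closed:
  "i \<in> I \<Longrightarrow> z \<in> carrier M3 \<Longrightarrow> smult M2 (X i) (h (smult M3 (Y i) z)) \<in> carrier M2"
  using M2 M3 X Y by (intro left_module_smult_closed h_closed) auto

lemma avg_closed: "z \<in> carrier M3 \<Longrightarrow> avg z \<in> carrier M2"
  unfolding avg_def using avg_term_closed by (auto intro!: M2.finsum_closed)

lemma avg_add:
  assumes x: "x \<in> carrier M3" and y: "y \<in> carrier M3"
  shows "avg (add M3 x y) = add M2 (avg x) (avg y)"
proof -
  have "avg (add M3 x y) = finsum M2 (\<lambda>i. add M2 (smult M2 (X i) (h (smult M3 (Y i) x)))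
                                                 (smult M2 (X i) (h (smult M3 (Y i) y)))) I"
    unfolding avg_def using x y X Y avg_term_closed
    by (intro M2.finsum_cong')
      (auto simp: left_module_smult_add[OF M3] left_module_smult_add[OF M2] h_add
            left_module_smult_closed[OF M3] h_closed)
  then show ?thesis
    unfolding avg_def using x y avg_term_closed by (simp add: M2.finsum_addf Pi_def)
qed

lemma avg_smult:
  assumes r: "r \<in> carrier S" and z: "z \<in> carrier M3"
  shows "avg (smult M3 r z) = smult M2 r (avg z)"
proof -
  have BS: "B r j i \<in> carrier S" for j i using B r T_sub by blast
  have hY: "h (smult M3 (Y i) z) \<in> carrier M2" if "i \<in> I" for i
    using that Y z by (intro h_closed left_module_smult_closed[OF M3])
  let ?f = "\<lambda>j i. smult M2 (mult S (X j) (B r j i)) (h (smult M3 (Y i) z))"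
  have f_closed: "?f j i \<in> carrier M2" if "j \<in> I" "i \<in> I" for j i
    using that X BS hY by (simp add: left_module_smult_assoc[OF M2] left_module_smult_closed[OF M2])
  have "smult M2 (X j) (h (smult M3 (Y j) (smult M3 r z))) = finsum M2 (\<lambda>i. ?f j i) I"
    if j: "j \<in> I" for j
  proof -
    have "smult M3 (Y j) (smult M3 r z) = finsum M3 (\<lambda>i. smult M3 (mult S (B r j i) (Y i)) z) I"
      using Y_mult[OF r j z] Y j r z by (simp add: left_module_smult_assoc[OF M3])
    also have "h \<dots> = finsum M2 (\<lambda>i. h (smult M3 (mult S (B r j i) (Y i)) z)) I"
      using BS Y z fin_I by (simp add: h_finsum Pi_def left_module_smult_closed[OF M3] left_module_smult_assoc[OF M3])
    also have "\<dots> = finsum M2 (\<lambda>i. smult M2 (B r j i) (h (smult M3 (Y i) z))) I"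
      using B[OF r] BS Y z hY by (intro M2.finsum_cong')
        (auto simp: h_smult left_module_smult_assoc[OF M3] left_module_smult_closed[OF M3]
          left_module_smult_closed[OF M2])
    finally have "h (smult M3 (Y j) (smult M3 r z)) = \<dots>" .
    then show ?thesis
      using j X BS hY fin_I
      by (simp add: left_module_smult_finsum[OF M2] Pi_def left_module_smult_closed[OF M2])
        (intro M2.finsum_cong', auto simp: left_module_smult_assoc[OF M2] left_module_smult_closed[OF M2])
  qed
  then have "avg (smult M3 r z) = finsum M2 (\<lambda>j. finsum M2 (\<lambda>i. ?f j i) I) I"
    unfolding avg_def using f_closed by (intro M2.finsum_cong') (auto intro!: M2.finsum_closed)
  also have "\<dots> = finsum M2 (\<lambda>i. finsum M2 (\<lambda>j. ?f j i) I) I"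
    using f_closed by (rule M2.finsum_swap[OF fin_I fin_I])
  also have "\<dots> = finsum M2 (\<lambda>i. smult M2 r (smult M2 (X i) (h (smult M3 (Y i) z)))) I"
    using mult_X[OF r _ hY] r X hY f_closed avg_term_closed z
    by (intro M2.finsum_cong') (auto simp: left_module_smult_assoc[OF M2] left_module_smult_closed[OF M2])
  also have "\<dots> = smult M2 r (avg z)"
    unfolding avg_def using r avg_term_closed z fin_I by (simp add: left_module_smult_finsum[OF M2] Pi_def)
  finally show ?thesis .
qed

lemma p_avg: assumes z: "z \<in> carrier M3" shows "p (avg z) = z"
proof -
  have "p (avg z) = finsum M3 (\<lambda>i. p (smult M2 (X i) (h (smult M3 (Y i) z)))) I"
    unfolding avg_def using avg_term_closed z fin_I by (simp add: p_finsum Pi_def)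
  also have "\<dots> = finsum M3 (\<lambda>i. smult M3 (mult S (X i) (Y i)) z) I"
    using z X Y by (intro M3.finsum_cong')
      (auto simp: p_smult h_closed p_h left_module_smult_closed[OF M3] left_module_smult_assoc[OF M3])
  finally show ?thesis using sum_XY[OF z] by simp
qed

lemma avg_splits: "splits_wrt (carrier S) M2 M3 p"
  unfolding splits_wrt_def lin_map_def using avg_closed avg_add avg_smult p_avg by blast

end

section \<open>Groupoids and unital partial actions\<close>

locale groupoid_structure =
  fixes G :: "'g set" and s t :: "'g \<Rightarrow> 'g" and cmp :: "'g \<Rightarrow> 'g \<Rightarrow> 'g" and gi :: "'g \<Rightarrow> 'g"
  assumes groupoid: "groupoid G s t cmp gi"
begin

lemma src_closed [simp]: "g \<in> G \<Longrightarrow> s g \<in> G"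
  and tgt_closed [simp]: "g \<in> G \<Longrightarrow> t g \<in> G"
  and src_src [simp]: "g \<in> G \<Longrightarrow> s (s g) = s g"
  and tgt_src [simp]: "g \<in> G \<Longrightarrow> t (s g) = s g"
  and src_tgt [simp]: "g \<in> G \<Longrightarrow> s (t g) = t g"
  and tgt_tgt [simp]: "g \<in> G \<Longrightarrow> t (t g) = t g"
  using groupoid unfolding groupoid_def by blast+

lemma cmp_closed [simp]: "g \<in> G \<Longrightarrow> h \<in> G \<Longrightarrow> s g = t h \<Longrightarrow> cmp g h \<in> G"
  and src_cmp [simp]: "g \<in> G \<Longrightarrow> h \<in> G \<Longrightarrow> s g = t h \<Longrightarrow> s (cmp g h) = s h"
  and tgt_cmp [simp]: "g \<in> G \<Longrightarrow> h \<in> G \<Longrightarrow> s g = t h \<Longrightarrow> t (cmp g h) = t g"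
  using groupoid unfolding groupoid_def by blast+

lemma cmp_assoc:
  "f \<in> G \<Longrightarrow> g \<in> G \<Longrightarrow> h \<in> G \<Longrightarrow> s f = t g \<Longrightarrow> s g = t h \<Longrightarrow>
     cmp (cmp f g) h = cmp f (cmp g h)"
  using groupoid unfolding groupoid_def by blast

lemma cmp_tgt_left [simp]: "g \<in> G \<Longrightarrow> cmp (t g) g = g"
  and cmp_src_right [simp]: "g \<in> G \<Longrightarrow> cmp g (s g) = g"
  using groupoid unfolding groupoid_def by blast+

lemma inv_closed [simp]: "g \<in> G \<Longrightarrow> gi g \<in> G"
  and src_inv [simp]: "g \<in> G \<Longrightarrow> s (gi g) = t g"
  and tgt_inv [simp]: "g \<in> G \<Longrightarrow> t (gi g) = s g"
  and cmp_inv_right [simp]: "g \<in> G \<Longrightarrow> cmp g (gi g) = t g"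
  and cmp_inv_left [simp]: "g \<in> G \<Longrightarrow> cmp (gi g) g = s g"
  using groupoid unfolding groupoid_def by blast+

lemma cmp_inv_cancel_right: "x \<in> G \<Longrightarrow> g \<in> G \<Longrightarrow> s x = t g \<Longrightarrow> cmp (cmp x g) (gi g) = x"
  using cmp_assoc[of x g "gi g"] cmp_src_right[of x] by simp

lemma cmp_inv_cancel_left: "x \<in> G \<Longrightarrow> g \<in> G \<Longrightarrow> s x = t g \<Longrightarrow> cmp (gi x) (cmp x g) = g"
  by (simp add: cmp_assoc[symmetric])

lemma inv_inv [simp]: "g \<in> G \<Longrightarrow> gi (gi g) = g"
  using cmp_inv_cancel_right[of g "gi g"] cmp_tgt_left[of "gi (gi g)"] by simp

lemma objs_iff: "e \<in> objs G s \<longleftrightarrow> e \<in> G \<and> s e = e"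
  unfolding objs_def by (auto intro: rev_image_eqI)

lemma src_in_objs: "g \<in> G \<Longrightarrow> s g \<in> objs G s"
  and tgt_in_objs: "g \<in> G \<Longrightarrow> t g \<in> objs G s"
  by (simp_all add: objs_iff)

lemma tgt_obj: "e \<in> objs G s \<Longrightarrow> t e = e"
  by (metis objs_iff tgt_src)

lemma inv_obj: assumes "e \<in> objs G s" shows "gi e = e"
proof -
  have "e \<in> G" "s e = e" "t e = e" using assms objs_iff tgt_obj by auto
  then show ?thesis using cmp_tgt_left[of "gi e"] cmp_inv_right[of e] by simp
qed

lemma inv_inj: "g \<in> G \<Longrightarrow> h \<in> G \<Longrightarrow> gi g = gi h \<longleftrightarrow> g = h"
  by (metis inv_inv)

lemma cmp_in_objs_iff:
  assumes x: "x \<in> G" and y: "y \<in> G" and st: "s x = t y"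
  shows "cmp x y \<in> objs G s \<longleftrightarrow> x = gi y"
proof
  assume "cmp x y \<in> objs G s"
  then have "cmp x y = s y" using x y st objs_iff by auto
  then show "x = gi y"
    using cmp_inv_cancel_right[OF x y st] cmp_tgt_left[of "gi y"] y by simp
qed (use y src_in_objs in simp)

lemma cmp_inv_left_eq_iff:
  assumes g: "g \<in> G" and h: "h \<in> G" and k: "k \<in> G" "t k = t g"
  shows "cmp (gi g) k = h \<longleftrightarrow> s g = t h \<and> k = cmp g h"
proof
  assume "cmp (gi g) k = h"
  moreover have "cmp g (cmp (gi g) k) = k" "t (cmp (gi g) k) = s g"
    using cmp_inv_cancel_left[of "gi g" k] g k by simp_all
  ultimately show "s g = t h \<and> k = cmp g h" by simp
qed (use g h cmp_inv_cancel_left in auto)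

end

locale unital_groupoid_action = groupoid_structure G s t cmp gi
  for G :: "'g set" and s t :: "'g \<Rightarrow> 'g" and cmp :: "'g \<Rightarrow> 'g \<Rightarrow> 'g" and gi :: "'g \<Rightarrow> 'g" +
  fixes u :: "'g \<Rightarrow> 'a::ring_1" and \<alpha> :: "'g \<Rightarrow> 'a \<Rightarrow> 'a"
  assumes partial_action: "unital_partial_action G s t cmp gi u \<alpha>"
begin

lemma zero_in_Aid: "0 \<in> Aid u g"
  unfolding Aid_def by (auto intro: exI[of _ 0])

lemma mult_unit_in_Aid: "x * u g \<in> Aid u g"
  unfolding Aid_def by auto

lemma unit_in_Aid: "u g \<in> Aid u g"
  using mult_unit_in_Aid[of 1] by simp

lemma unit_idem: "g \<in> G \<Longrightarrow> u g * u g = u g"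
  and unit_central: "g \<in> G \<Longrightarrow> b * u g = u g * b"
  using partial_action unfolding unital_partial_action_def by blast+

lemma Aid_iff: "g \<in> G \<Longrightarrow> x \<in> Aid u g \<longleftrightarrow> x * u g = x"
  unfolding Aid_def by (auto simp: mult.assoc unit_idem) (metis)

lemma unit_mult_in_Aid: "g \<in> G \<Longrightarrow> u g * x \<in> Aid u g"
  using mult_unit_in_Aid unit_central by metis

lemma Aid_mult_right:
  assumes g: "g \<in> G" and x: "x \<in> Aid u g" shows "x * y \<in> Aid u g"
proof -
  have "x * y * u g = x * u g * y" using unit_central[OF g, of y] by (simp add: mult.assoc)
  then show ?thesis using g x Aid_iff by simp
qed

lemma Aid_unit_left: "g \<in> G \<Longrightarrow> x \<in> Aid u g \<Longrightarrow> u g * x = x"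
  using Aid_iff unit_central by metis

lemma Aid_sub_tgt: "g \<in> G \<Longrightarrow> Aid u g \<subseteq> Aid u (t g)"
  using partial_action unfolding unital_partial_action_def by blast

lemma unit_mult_unit_tgt: "g \<in> G \<Longrightarrow> u g * u (t g) = u g"
  using Aid_sub_tgt unit_in_Aid Aid_iff tgt_closed by blast

lemma act_bij: "g \<in> G \<Longrightarrow> bij_betw (\<alpha> g) (Aid u (gi g)) (Aid u g)"
  and act_add: "g \<in> G \<Longrightarrow> x \<in> Aid u (gi g) \<Longrightarrow> y \<in> Aid u (gi g) \<Longrightarrow> \<alpha> g (x + y) = \<alpha> g x + \<alpha> g y"
  and act_mult: "g \<in> G \<Longrightarrow> x \<in> Aid u (gi g) \<Longrightarrow> y \<in> Aid u (gi g) \<Longrightarrow> \<alpha> g (x * y) = \<alpha> g x * \<alpha> g y"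
  and act_obj: "e \<in> objs G s \<Longrightarrow> x \<in> Aid u e \<Longrightarrow> \<alpha> e x = x"
  using partial_action unfolding unital_partial_action_def by blast+

lemma act_cmp:
  "g \<in> G \<Longrightarrow> h \<in> G \<Longrightarrow> s g = t h \<Longrightarrow> x \<in> Aid u (gi h) \<Longrightarrow> \<alpha> h x \<in> Aid u (gi g) \<Longrightarrow>
     x \<in> Aid u (gi (cmp g h)) \<and> \<alpha> g (\<alpha> h x) = \<alpha> (cmp g h) x"
  using partial_action unfolding unital_partial_action_def by blast

lemma act_in_Aid: "g \<in> G \<Longrightarrow> x \<in> Aid u (gi g) \<Longrightarrow> \<alpha> g x \<in> Aid u g"
  using act_bij bij_betw_apply by fast

lemma act_zero: "g \<in> G \<Longrightarrow> \<alpha> g 0 = 0"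
  using act_add[of g 0 0] zero_in_Aid by simp

lemma act_inv_act: assumes g: "g \<in> G" and x: "x \<in> Aid u (gi g)"
  shows "\<alpha> (gi g) (\<alpha> g x) = x"
proof -
  have "\<alpha> (gi g) (\<alpha> g x) = \<alpha> (s g) x"
    using act_cmp[of "gi g" g x] g x act_in_Aid by simp
  moreover have "x \<in> Aid u (s g)"
    using Aid_sub_tgt[of "gi g"] g x by auto
  ultimately show ?thesis using g act_obj src_in_objs by simp
qed

lemma act_act_inv: "g \<in> G \<Longrightarrow> y \<in> Aid u g \<Longrightarrow> \<alpha> g (\<alpha> (gi g) y) = y"
  using act_inv_act[of "gi g" y] by simp

text \<open>\<open>\<alpha> x\<close> maps \<open>A_{x^{-1}} \<inter> A_g\<close> onto \<open>A_x \<inter> A_{xg}\<close>; the identities of these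
  ideals are the products of units below.\<close>

lemma act_Aid_inter:
  assumes x: "x \<in> G" and g: "g \<in> G" and st: "s x = t g"
    and y: "y \<in> Aid u (gi x)" "y \<in> Aid u g"
  shows "\<alpha> x y \<in> Aid u (cmp x g)"
proof -
  let ?w = "\<alpha> (gi g) y"
  have w: "?w \<in> Aid u (gi g)" "\<alpha> g ?w = y"
    using act_in_Aid[of "gi g" y] act_act_inv g y by auto
  then have "\<alpha> x y = \<alpha> (cmp x g) ?w" "?w \<in> Aid u (gi (cmp x g))"
    using act_cmp[of x g ?w] x g st y by auto
  then show ?thesis using act_in_Aid x g st by simp
qed

lemma act_Aid_inter_onto:
  assumes x: "x \<in> G" and g: "g \<in> G" and st: "s x = t g"
    and q: "q \<in> Aid u x" "q \<in> Aid u (cmp x g)"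
  obtains p where "p \<in> Aid u (gi x)" "p \<in> Aid u g" "\<alpha> x p = q"
proof
  let ?k = "cmp x g"
  let ?w = "\<alpha> (gi ?k) q"
  have k: "?k \<in> G" "s ?k = s g" "t ?k = t x" using x g st by auto
  have w: "?w \<in> Aid u (gi ?k)" "\<alpha> ?k ?w = q"
    using act_in_Aid[of "gi ?k" q] act_act_inv k q by auto
  have "?w \<in> Aid u (gi g) \<and> \<alpha> (gi x) q = \<alpha> g ?w"
    using act_cmp[of "gi x" ?k ?w] w q x k cmp_inv_cancel_left[OF x g st] by auto
  then show "\<alpha> (gi x) q \<in> Aid u g" using act_in_Aid g by auto
  show "\<alpha> (gi x) q \<in> Aid u (gi x)" using act_in_Aid[of "gi x" q] x q by simp
  show "\<alpha> x (\<alpha> (gi x) q) = q" using act_act_inv x q by simp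
qed

lemma act_unit_mult_unit:
  assumes x: "x \<in> G" and g: "g \<in> G" and st: "s x = t g"
  shows "\<alpha> x (u (gi x) * u g) = u x * u (cmp x g)"
proof -
  let ?e = "u (gi x) * u g" and ?q = "u x * u (cmp x g)"
  have gx: "gi x \<in> G" and k: "cmp x g \<in> G" using x g st by auto
  have e: "?e \<in> Aid u (gi x)" "?e \<in> Aid u g"
    using gx by (simp_all add: unit_mult_in_Aid mult_unit_in_Aid)
  have q: "?q \<in> Aid u x" "?q \<in> Aid u (cmp x g)"
    using x by (simp_all add: unit_mult_in_Aid mult_unit_in_Aid)
  obtain p where p: "p \<in> Aid u (gi x)" "p \<in> Aid u g" "\<alpha> x p = ?q"
    using act_Aid_inter_onto[OF x g st q] by blast
  have "?e * p = p"
    using Aid_unit_left[OF gx p(1)] Aid_unit_left[OF g p(2)] by (simp add: mult.assoc)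
  then have "\<alpha> x ?e * ?q = ?q"
    using act_mult[OF x e(1) p(1)] p(3) by metis
  moreover have "\<alpha> x ?e * ?q = \<alpha> x ?e"
    using act_in_Aid[OF x e(1)] act_Aid_inter[OF x g st e] Aid_iff[OF x] Aid_iff[OF k]
    by (simp add: mult.assoc[symmetric])
  ultimately show ?thesis by simp
qed

lemma act_mult_unit:
  assumes x: "x \<in> G" and g: "g \<in> G" and st: "s x = t g" and y: "y \<in> Aid u (gi x)"
  shows "\<alpha> x (y * u g) = \<alpha> x y * u (cmp x g)"
proof -
  have gx: "gi x \<in> G" using x by simp
  have e: "u (gi x) * u g \<in> Aid u (gi x)" using gx by (rule unit_mult_in_Aid)
  have "y * u g = y * (u (gi x) * u g)" using Aid_iff[OF gx] y by (simp add: mult.assoc[symmetric])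
  then have "\<alpha> x (y * u g) = \<alpha> x y * (u x * u (cmp x g))"
    using act_mult[OF x y e] act_unit_mult_unit[OF x g st] by simp
  also have "\<dots> = \<alpha> x y * u (cmp x g)"
    using act_in_Aid[OF x y] Aid_iff[OF x] by (simp add: mult.assoc[symmetric])
  finally show ?thesis .
qed

lemma act_unit: "x \<in> G \<Longrightarrow> \<alpha> x (u (gi x)) = u x"
  using act_unit_mult_unit[of x "s x"] unit_mult_unit_tgt[of "gi x"] unit_idem by simp

end

section \<open>Products in the partial skew groupoid ring\<close>

lemma sum_eq_single:
  assumes "finite P" "\<And>p. p \<in> P \<Longrightarrow> p \<noteq> p0 \<Longrightarrow> f p = 0"
  shows "sum f P = (if p0 \<in> P then f p0 else 0)"
  using assms by (cases "p0 \<in> P") (auto simp: sum.remove intro!: sum.neutral)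

text \<open>\<open>delta g v\<close> is the element \<open>v \<delta>_g\<close>; \<open>basis g\<close> and \<open>dual g\<close> below are the
  \<open>x_g\<close> and \<open>y_g\<close> of the header.\<close>

definition delta :: "'g \<Rightarrow> 'a::zero \<Rightarrow> 'g \<Rightarrow> 'a" where
  "delta g v = (\<lambda>k. if k = g then v else 0)"

locale finite_groupoid_action = unital_groupoid_action +
  assumes finite_G: "finite G"
begin

abbreviation S where "S \<equiv> skew_ring G s t cmp gi u \<alpha>"
abbreviation emb where "emb \<equiv> skew_emb G s u"

lemma carrier_skew_ring:
  "r \<in> carrier S \<longleftrightarrow> (\<forall>g. (g \<in> G \<longrightarrow> r g \<in> Aid u g) \<and> (g \<notin> G \<longrightarrow> r g = 0))"
  by (simp add: skew_ring_def)

lemma mult_skew_ring: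
  "mult S x y k = (\<Sum>(g, h)\<in>{(g, h) \<in> G \<times> G. s g = t h \<and> cmp g h = k}. \<alpha> g (\<alpha> (gi g) (x g) * y h))"
  by (simp add: skew_ring_def)

lemma finite_composable: "finite {(g, h) \<in> G \<times> G. P g h}"
  by (rule finite_subset[OF _ finite_cartesian_product[OF finite_G finite_G]]) auto

lemma delta_carrier: "g \<in> G \<Longrightarrow> v \<in> Aid u g \<Longrightarrow> delta g v \<in> carrier S"
  by (auto simp: carrier_skew_ring delta_def zero_in_Aid)

lemma emb_carrier: "emb b \<in> carrier S"
  by (auto simp: carrier_skew_ring skew_emb_def objs_iff mult_unit_in_Aid zero_in_Aid)

lemma emb_src: "g \<in> G \<Longrightarrow> emb b (s g) = b * u (s g)"
  by (simp add: skew_emb_def src_in_objs)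

lemma emb_cmp:
  "x \<in> G \<Longrightarrow> y \<in> G \<Longrightarrow> s x = t y \<Longrightarrow> emb b (cmp x y) = (if x = gi y then b * u (s y) else 0)"
  by (auto simp: skew_emb_def cmp_in_objs_iff)

lemma mult_delta_left:
  assumes g: "g \<in> G"
  shows "mult S (delta g v) r k =
    (if k \<in> G \<and> t k = t g then \<alpha> g (\<alpha> (gi g) v * r (cmp (gi g) k)) else 0)"
proof -
  let ?P = "{(x, y) \<in> G \<times> G. s x = t y \<and> cmp x y = k}"
  let ?f = "\<lambda>(x, y). \<alpha> x (\<alpha> (gi x) (delta g v x) * r y)"
  have "?f p = 0" if p: "p \<in> ?P" "p \<noteq> (g, cmp (gi g) k)" for p
  proof -
    obtain x y where xy: "p = (x, y)" "x \<in> G" "y \<in> G" "s x = t y" "cmp x y = k"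
      using p(1) by auto
    have "x \<noteq> g"
    proof
      assume "x = g"
      then have "y = cmp (gi g) k" using cmp_inv_cancel_left[of g y] xy by simp
      then show False using p(2) xy \<open>x = g\<close> by simp
    qed
    then show ?thesis using xy by (simp add: delta_def act_zero)
  qed
  then have "mult S (delta g v) r k = (if (g, cmp (gi g) k) \<in> ?P then ?f (g, cmp (gi g) k) else 0)"
    unfolding mult_skew_ring by (rule sum_eq_single[OF finite_composable])
  moreover have "(g, cmp (gi g) k) \<in> ?P \<longleftrightarrow> k \<in> G \<and> t k = t g"
  proof
    assume "(g, cmp (gi g) k) \<in> ?P"
    then have "cmp (gi g) k \<in> G" "s g = t (cmp (gi g) k)" "k = cmp g (cmp (gi g) k)" by auto
    then show "k \<in> G \<and> t k = t g" using g cmp_closed tgt_cmp by metis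
  next
    assume k: "k \<in> G \<and> t k = t g"
    then have "cmp (gi g) k \<in> G" "t (cmp (gi g) k) = s g" "cmp g (cmp (gi g) k) = k"
      using g cmp_inv_cancel_left[of "gi g" k] by simp_all
    then show "(g, cmp (gi g) k) \<in> ?P" using g by simp
  qed
  ultimately show ?thesis by (simp add: delta_def)
qed

lemma mult_delta_right:
  assumes h: "h \<in> G"
  shows "mult S r (delta h w) k =
    (if k \<in> G \<and> s k = s h
     then \<alpha> (cmp k (gi h)) (\<alpha> (gi (cmp k (gi h))) (r (cmp k (gi h))) * w) else 0)"
proof -
  let ?P = "{(x, y) \<in> G \<times> G. s x = t y \<and> cmp x y = k}"
  let ?f = "\<lambda>(x, y). \<alpha> x (\<alpha> (gi x) (r x) * delta h w y)"
  have "?f p = 0" if p: "p \<in> ?P" "p \<noteq> (cmp k (gi h), h)" for p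
  proof -
    obtain x y where xy: "p = (x, y)" "x \<in> G" "y \<in> G" "s x = t y" "cmp x y = k"
      using p(1) by auto
    have "y \<noteq> h"
    proof
      assume "y = h"
      then have "x = cmp k (gi h)" using cmp_inv_cancel_right[of x h] xy by simp
      then show False using p(2) xy \<open>y = h\<close> by simp
    qed
    then show ?thesis using xy by (simp add: delta_def act_zero)
  qed
  then have "mult S r (delta h w) k = (if (cmp k (gi h), h) \<in> ?P then ?f (cmp k (gi h), h) else 0)"
    unfolding mult_skew_ring by (rule sum_eq_single[OF finite_composable])
  moreover have "(cmp k (gi h), h) \<in> ?P \<longleftrightarrow> k \<in> G \<and> s k = s h"
  proof
    assume "(cmp k (gi h), h) \<in> ?P"
    then have "cmp k (gi h) \<in> G" "s (cmp k (gi h)) = t h" "k = cmp (cmp k (gi h)) h" by auto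
    then show "k \<in> G \<and> s k = s h" using h cmp_closed src_cmp by metis
  next
    assume k: "k \<in> G \<and> s k = s h"
    then have "cmp k (gi h) \<in> G" "s (cmp k (gi h)) = t h" "cmp (cmp k (gi h)) h = k"
      using h cmp_assoc[of k "gi h" h] cmp_src_right[of k] by simp_all
    then show "(cmp k (gi h), h) \<in> ?P" using h by simp
  qed
  ultimately show ?thesis by (simp add: delta_def)
qed

lemma mult_delta_delta:
  assumes g: "g \<in> G" and h: "h \<in> G"
  shows "mult S (delta g v) (delta h w) =
    (if s g = t h then delta (cmp g h) (\<alpha> g (\<alpha> (gi g) v * w)) else (\<lambda>k. 0))"
proof
  fix k
  have "mult S (delta g v) (delta h w) k =
    (if k \<in> G \<and> t k = t g then \<alpha> g (\<alpha> (gi g) v * delta h w (cmp (gi g) k)) else 0)"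
    by (rule mult_delta_left[OF g])
  then show "mult S (delta g v) (delta h w) k =
    (if s g = t h then delta (cmp g h) (\<alpha> g (\<alpha> (gi g) v * w)) else (\<lambda>k. 0)) k"
    using g h cmp_inv_left_eq_iff[OF g h] by (auto simp: delta_def act_zero)
qed

lemma sum_carrier:
  assumes "finite J" "\<And>j. j \<in> J \<Longrightarrow> w j \<in> carrier S"
  shows "(\<lambda>k. \<Sum>j\<in>J. w j k) \<in> carrier S"
  unfolding carrier_skew_ring
proof (intro allI conjI impI)
  fix g assume g: "g \<in> G"
  have "(\<Sum>j\<in>J. w j g) * u g = (\<Sum>j\<in>J. w j g * u g)"
    by (simp add: sum_distrib_right)
  also have "\<dots> = (\<Sum>j\<in>J. w j g)"
    using assms(2) g by (intro sum.cong) (auto simp: carrier_skew_ring Aid_iff)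
  finally have "(\<Sum>j\<in>J. w j g) * u g = (\<Sum>j\<in>J. w j g)" .
  then show "(\<Sum>j\<in>J. w j g) \<in> Aid u g" using Aid_iff[OF g] by blast
next
  fix g assume "g \<notin> G"
  then show "(\<Sum>j\<in>J. w j g) = 0" using assms(2) by (simp add: carrier_skew_ring)
qed

lemma smult_sum:
  assumes M: "left_module S M" and J: "finite J" and w: "\<And>j. j \<in> J \<Longrightarrow> w j \<in> carrier S"
    and m: "m \<in> carrier M"
  shows "smult M (\<lambda>k. \<Sum>j\<in>J. w j k) m = finsum M (\<lambda>j. smult M (w j) m) J"
  using J w
proof (induction J rule: finite_induct)
  case empty
  interpret M: abelian_group M using M by (rule left_module_abelian_group)
  have zero: "zero S \<in> carrier S" "add S (zero S) (zero S) = zero S"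
    using zero_in_Aid by (simp_all add: skew_ring_def)
  have "smult M (zero S) m = zero M"
    using left_module_add_smult[OF M zero(1) zero(1) m] left_module_smult_closed[OF M zero(1) m]
    by (metis M.add.l_cancel_one' M.zero_closed M.r_zero zero(2))
  moreover have "(\<lambda>k. \<Sum>j\<in>{}. w j k) = zero S" by (simp add: skew_ring_def)
  ultimately show ?case by simp
next
  case (insert j J)
  interpret M: abelian_group M using M by (rule left_module_abelian_group)
  have "(\<lambda>k. \<Sum>j\<in>insert j J. w j k) = add S (w j) (\<lambda>k. \<Sum>j\<in>J. w j k)"
    using insert by (simp add: skew_ring_def)
  then have "smult M (\<lambda>k. \<Sum>j\<in>insert j J. w j k) m
      = add M (smult M (w j) m) (smult M (\<lambda>k. \<Sum>j\<in>J. w j k) m)"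
    using left_module_add_smult[OF M _ sum_carrier[OF insert(1)] m, of "w j"] insert by simp
  then show ?case
    using insert m by (simp add: M.finsum_insert Pi_def left_module_smult_closed[OF M])
qed

definition basis where
  "basis g = delta g (u g)"

text \<open>\<open>transfer_coeff r \<rho> g\<close> is the coefficient \<open>\<beta>_\<rho>_g\<close> of the header: it moves \<open>r\<close>
  past \<open>basis g\<close> from the right (\<open>mult_basis_eq\<close>) and past \<open>dual \<rho>\<close> from the left
  (\<open>dual_mult_eq\<close>).\<close>

definition transfer_coeff where
  "transfer_coeff r \<rho> g = (if s \<rho> = s g then \<alpha> (gi \<rho>) (r (cmp \<rho> (gi g)) * u \<rho>) else 0)"

lemma basis_carrier: "g \<in> G \<Longrightarrow> basis g \<in> carrier S"
  unfolding basis_def by (rule delta_carrier) (simp_all add: unit_in_Aid)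

lemma mult_basis_right:
  assumes r: "r \<in> carrier S" and g: "g \<in> G"
  shows "mult S r (basis g) k = (if k \<in> G \<and> s k = s g then r (cmp k (gi g)) * u k else 0)"
proof (cases "k \<in> G \<and> s k = s g")
  case True
  let ?x = "cmp k (gi g)"
  have x: "?x \<in> G" "s ?x = t g" "cmp ?x g = k"
    using True g cmp_assoc[of k "gi g" g] cmp_src_right[of k] by simp_all
  have rx: "r ?x \<in> Aid u ?x" using r x by (simp add: carrier_skew_ring)
  have "\<alpha> ?x (\<alpha> (gi ?x) (r ?x) * u g) = \<alpha> ?x (\<alpha> (gi ?x) (r ?x)) * u k"
    using act_mult_unit[OF x(1) g x(2)] act_in_Aid[of "gi ?x" "r ?x"] rx x by simp
  also have "\<dots> = r ?x * u k" using act_act_inv[OF x(1) rx] by simp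
  finally show ?thesis using True g by (simp add: basis_def mult_delta_right)
next
  case False
  then show ?thesis unfolding basis_def mult_delta_right[OF g] by (simp only: if_not_P if_False)
qed

lemma basis_mult_emb:
  assumes \<rho>: "\<rho> \<in> G"
  shows "mult S (basis \<rho>) (emb b) = delta \<rho> (\<alpha> \<rho> (b * u (gi \<rho>)))"
proof
  fix k
  have unit: "\<alpha> (gi \<rho>) (u \<rho>) = u (gi \<rho>)" using act_unit[of "gi \<rho>"] \<rho> by simp
  have "u (gi \<rho>) * (b * u (s \<rho>)) = (u (gi \<rho>) * u (s \<rho>)) * b"
    using unit_central[of "s \<rho>" b] \<rho> by (simp add: mult.assoc)
  also have "\<dots> = b * u (gi \<rho>)"
    using unit_central[of "gi \<rho>" b] unit_mult_unit_tgt[of "gi \<rho>"] \<rho> by simp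
  finally have "u (gi \<rho>) * (b * u (s \<rho>)) = b * u (gi \<rho>)" .
  then show "mult S (basis \<rho>) (emb b) k = delta \<rho> (\<alpha> \<rho> (b * u (gi \<rho>))) k"
    unfolding basis_def mult_delta_left[OF \<rho>]
    using \<rho> unit by (auto simp: emb_cmp emb_src inv_inj delta_def act_zero)
qed


lemma mult_basis_eq:
  assumes r: "r \<in> carrier S" and g: "g \<in> G"
  shows "mult S r (basis g) = (\<lambda>k. \<Sum>\<rho>\<in>G. mult S (basis \<rho>) (emb (transfer_coeff r \<rho> g)) k)"
proof
  fix k
  have "(\<Sum>\<rho>\<in>G. mult S (basis \<rho>) (emb (transfer_coeff r \<rho> g)) k)
      = (\<Sum>\<rho>\<in>G. if k = \<rho> then \<alpha> \<rho> (transfer_coeff r \<rho> g * u (gi \<rho>)) else 0)"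
    by (intro sum.cong) (auto simp: basis_mult_emb delta_def)
  also have "\<dots> = (if k \<in> G then \<alpha> k (transfer_coeff r k g * u (gi k)) else 0)"
    using finite_G by simp
  also have "\<dots> = mult S r (basis g) k"
  proof (cases "k \<in> G \<and> s k = s g")
    case True
    let ?z = "r (cmp k (gi g)) * u k"
    have z: "?z \<in> Aid u (gi (gi k))" using True mult_unit_in_Aid by simp
    then have "\<alpha> (gi k) ?z * u (gi k) = \<alpha> (gi k) ?z"
      using True act_in_Aid[of "gi k" ?z] Aid_iff[of "gi k"] by simp
    then have "\<alpha> k (transfer_coeff r k g * u (gi k)) = ?z"
      using True act_act_inv[of k ?z] mult_unit_in_Aid by (simp add: transfer_coeff_def)
    then show ?thesis using True mult_basis_right[OF r g] by simp
  qed (auto simp: mult_basis_right[OF r g] transfer_coeff_def act_zero)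
  finally show "mult S r (basis g) k = (\<Sum>\<rho>\<in>G. mult S (basis \<rho>) (emb (transfer_coeff r \<rho> g)) k)"
    by (rule sym)
qed

lemma transfer_coeff_in_Aid:
  assumes r: "r \<in> carrier S" and \<rho>: "\<rho> \<in> G" and k: "k \<in> G" "t k = s \<rho>"
  shows "\<alpha> (gi \<rho>) (r (cmp \<rho> k) * u \<rho>) \<in> Aid u k"
proof -
  let ?y = "cmp \<rho> k" and ?z = "r (cmp \<rho> k) * u \<rho>"
  have y: "?y \<in> G" "cmp (gi \<rho>) ?y = k" using \<rho> k cmp_inv_cancel_left[of \<rho> k] by simp_all
  have z: "?z \<in> Aid u (gi (gi \<rho>))" using \<rho> mult_unit_in_Aid by simp
  have "r ?y \<in> Aid u ?y" using r y(1) by (simp add: carrier_skew_ring)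
  then have ry: "r ?y * u ?y = r ?y" using y(1) Aid_iff by blast
  have "?z * u ?y = r ?y * (u ?y * u \<rho>)"
    using unit_central[OF \<rho>, of "u ?y"] by (simp add: mult.assoc)
  also have "\<dots> = ?z" using ry by (simp add: mult.assoc[symmetric])
  finally have "\<alpha> (gi \<rho>) ?z = \<alpha> (gi \<rho>) ?z * u k"
    using act_mult_unit[of "gi \<rho>" ?y ?z] \<rho> k y z by simp
  then show ?thesis using mult_unit_in_Aid by metis
qed

end

section \<open>Semisimplicity of the extension\<close>

locale trace_one = finite_groupoid_action +
  fixes a
  assumes central: "\<And>b. a * b = b * a"
    and trace_one: "\<And>e. e \<in> objs G s \<Longrightarrow> trace_j G s t gi u \<alpha> e a = u e"
begin

definition dual where
  "dual g = delta (gi g) (a * u (gi g))"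

lemma dual_carrier: "g \<in> G \<Longrightarrow> dual g \<in> carrier S"
  unfolding dual_def by (rule delta_carrier) (simp_all add: mult_unit_in_Aid)

lemma basis_mult_dual:
  assumes g: "g \<in> G"
  shows "mult S (basis g) (dual g) = delta (t g) (\<alpha> g (a * u (gi g)))"
proof -
  have "u (gi g) * (a * u (gi g)) = a * (u (gi g) * u (gi g))"
    by (simp only: mult.assoc[symmetric] central[of "u (gi g)", symmetric])
  then have "u (gi g) * (a * u (gi g)) = a * u (gi g)" using unit_idem[of "gi g"] g by simp
  moreover have "\<alpha> (gi g) (u g) = u (gi g)" using act_unit[of "gi g"] g by simp
  ultimately show ?thesis using g by (simp add: basis_def dual_def mult_delta_delta)
qed

lemma sum_basis_mult_dual: "(\<lambda>k. \<Sum>g\<in>G. mult S (basis g) (dual g) k) = one S"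
proof
  fix k
  let ?v = "\<lambda>g. \<alpha> g (a * u (gi g))"
  have "(\<Sum>g\<in>G. mult S (basis g) (dual g) k) = (\<Sum>g\<in>G. if k = t g then ?v g else 0)"
    by (intro sum.cong) (auto simp: basis_mult_dual delta_def)
  also have "\<dots> = sum ?v {g\<in>G. k = t g}"
    by (rule sum.inter_filter[OF finite_G, symmetric])
  also have "\<dots> = one S k"
  proof (cases "k \<in> objs G s")
    case True
    have "trace_j G s t gi u \<alpha> k a = (\<Sum>e\<in>objs G s. sum ?v {g \<in> {g\<in>G. k = t g}. s g = e})"
      unfolding trace_j_def trace_ij_def by (intro sum.cong) (auto intro!: sum.cong)
    also have "\<dots> = sum ?v {g\<in>G. k = t g}"
      using finite_G src_in_objs by (intro sum.group) (auto simp: objs_def)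
    finally show ?thesis using trace_one True by (simp add: skew_ring_def)
  next
    case False
    then have "{g\<in>G. k = t g} = {}" using tgt_in_objs by auto
    then have "sum ?v {g\<in>G. k = t g} = 0" by (simp only: sum.empty)
    then show ?thesis using False by (simp add: skew_ring_def)
  qed
  finally show "(\<Sum>g\<in>G. mult S (basis g) (dual g) k) = one S k" .
qed

lemma emb_mult_dual:
  assumes g: "g \<in> G"
  shows "mult S (emb b) (dual g) = delta (gi g) (b * a * u (gi g))"
proof
  fix k
  have sg: "s g \<in> objs G s" "gi (s g) = s g" using g src_in_objs inv_obj by auto
  have "u (s g) * (a * u (gi g)) = a * (u (s g) * u (gi g))"
    by (simp only: mult.assoc[symmetric] central[of "u (s g)", symmetric])
  then have "b * u (s g) * (a * u (gi g)) = b * a * (u (s g) * u (gi g))"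
    by (simp add: mult.assoc)
  also have "\<dots> = b * a * u (gi g)"
    using unit_central[of "s g" "u (gi g)"] unit_mult_unit_tgt[of "gi g"] g by simp
  finally have prod: "b * u (s g) * (a * u (gi g)) = b * a * u (gi g)" .
  have "b * u (s g) * (a * u (gi g)) \<in> Aid u (s g)"
    using g by (simp add: Aid_mult_right mult_unit_in_Aid)
  then have "\<alpha> (s g) (\<alpha> (s g) (b * u (s g)) * (a * u (gi g))) = b * a * u (gi g)"
    using act_obj[OF sg(1)] mult_unit_in_Aid prod by simp
  then show "mult S (emb b) (dual g) k = delta (gi g) (b * a * u (gi g)) k"
    unfolding dual_def mult_delta_right[OF inv_closed[OF g]]
    using g sg by (auto simp: emb_cmp emb_src inv_inj delta_def act_zero)
qed

lemma dual_mult_eq: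
  assumes r: "r \<in> carrier S" and \<rho>: "\<rho> \<in> G"
  shows "mult S (dual \<rho>) r = (\<lambda>k. \<Sum>g\<in>G. mult S (emb (transfer_coeff r \<rho> g)) (dual g) k)"
proof
  fix k
  let ?w = "transfer_coeff r \<rho> (gi k)"
  have "(\<Sum>g\<in>G. mult S (emb (transfer_coeff r \<rho> g)) (dual g) k)
      = (\<Sum>g\<in>G. if k = gi g then transfer_coeff r \<rho> g * a * u (gi g) else 0)"
    by (intro sum.cong) (auto simp: emb_mult_dual delta_def)
  also have "\<dots> = (if k \<in> G then ?w * a * u k else 0)"
  proof (cases "k \<in> G")
    case True
    then have "(\<Sum>g\<in>G. if k = gi g then transfer_coeff r \<rho> g * a * u (gi g) else 0)
        = (\<Sum>g\<in>G. if g = gi k then transfer_coeff r \<rho> g * a * u (gi g) else 0)"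
      by (intro sum.cong) auto
    then show ?thesis using True finite_G by simp
  qed (auto intro!: sum.neutral)
  also have "\<dots> = mult S (dual \<rho>) r k"
  proof (cases "k \<in> G \<and> t k = s \<rho>")
    case True
    let ?c = "\<alpha> \<rho> (a * u (gi \<rho>))" and ?z = "r (cmp \<rho> k) * u \<rho>"
    have w: "?w = \<alpha> (gi \<rho>) ?z" "?w \<in> Aid u k"
      using True transfer_coeff_in_Aid[OF r \<rho>] by (simp_all add: transfer_coeff_def)
    have c: "?c \<in> Aid u \<rho>" using act_in_Aid[OF \<rho>] mult_unit_in_Aid by blast
    then have "?c * r (cmp \<rho> k) = ?c * (u \<rho> * r (cmp \<rho> k))"
      using Aid_iff[OF \<rho>] by (simp add: mult.assoc[symmetric])
    also have "\<dots> = ?c * ?z" using unit_central[OF \<rho>] by simp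
    finally have "?c * r (cmp \<rho> k) = ?c * ?z" .
    then have "\<alpha> (gi \<rho>) (?c * r (cmp \<rho> k)) = a * u (gi \<rho>) * ?w"
      using act_mult[of "gi \<rho>" ?c ?z] act_inv_act[OF \<rho>] mult_unit_in_Aid c w(1) \<rho> by simp
    also have "\<dots> = a * ?w"
      using Aid_unit_left[of "gi \<rho>" ?w] act_in_Aid[of "gi \<rho>" ?z] w(1) \<rho> mult_unit_in_Aid
      by (simp add: mult.assoc)
    also have "\<dots> = a * (?w * u k)" using w(2) Aid_iff True by simp
    also have "\<dots> = ?w * a * u k" by (simp only: mult.assoc[symmetric] central[of ?w])
    finally show ?thesis
      using True \<rho> by (simp add: dual_def mult_delta_left)
  next
    case False
    then show ?thesis using \<rho> by (auto simp: dual_def mult_delta_left transfer_coeff_def)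
  qed
  finally show "mult S (dual \<rho>) r k = (\<Sum>g\<in>G. mult S (emb (transfer_coeff r \<rho> g)) (dual g) k)"
    by (rule sym)
qed

lemma basis_mult_dual_carrier: "g \<in> G \<Longrightarrow> mult S (basis g) (dual g) \<in> carrier S"
  using act_in_Aid[of g "a * u (gi g)"] Aid_sub_tgt[of g]
  by (auto simp: basis_mult_dual mult_unit_in_Aid intro!: delta_carrier)

lemma basis_mult_emb_carrier: "g \<in> G \<Longrightarrow> mult S (basis g) (emb b) \<in> carrier S"
  by (simp add: basis_mult_emb delta_carrier act_in_Aid mult_unit_in_Aid)

lemma emb_mult_dual_carrier: "g \<in> G \<Longrightarrow> mult S (emb b) (dual g) \<in> carrier S"
  by (simp add: emb_mult_dual delta_carrier mult_unit_in_Aid)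

lemma splits_of_emb_splits:
  assumes M2: "left_module S M2" and M3: "left_module S M3"
    and p: "lin_map (carrier S) M2 M3 p"
    and h: "lin_map (range emb) M3 M2 h" and p_h: "\<And>z. z \<in> carrier M3 \<Longrightarrow> p (h z) = z"
  shows "splits_wrt (carrier S) M2 M3 p"
proof -
  interpret averaging S "range emb" M2 M3 p h G basis dual "\<lambda>r j i. emb (transfer_coeff r j i)"
  proof
    show "left_module S M2" "left_module S M3" "lin_map (carrier S) M2 M3 p"
      "lin_map (range emb) M3 M2 h" by fact+
    show "finite G" by (rule finite_G)
    show "z \<in> carrier M3 \<Longrightarrow> p (h z) = z" for z by (rule p_h)
    show "range emb \<subseteq> carrier S" using emb_carrier by blast
    show "i \<in> G \<Longrightarrow> basis i \<in> carrier S" for i by (rule basis_carrier)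
    show "i \<in> G \<Longrightarrow> dual i \<in> carrier S" for i by (rule dual_carrier)
    show "emb (transfer_coeff r j i) \<in> range emb" for r i j by blast
  next
    fix z assume z: "z \<in> carrier M3"
    have "finsum M3 (\<lambda>i. smult M3 (mult S (basis i) (dual i)) z) G
        = smult M3 (\<lambda>k. \<Sum>i\<in>G. mult S (basis i) (dual i) k) z"
      using smult_sum[OF M3 finite_G basis_mult_dual_carrier z] by simp
    then show "finsum M3 (\<lambda>i. smult M3 (mult S (basis i) (dual i)) z) G = z"
      using left_module_smult_one[OF M3 z] by (simp add: sum_basis_mult_dual)
  next
    fix r i m assume r: "r \<in> carrier S" and i: "i \<in> G" and m: "m \<in> carrier M2"
    show "smult M2 (mult S r (basis i)) m =
      finsum M2 (\<lambda>j. smult M2 (mult S (basis j) (emb (transfer_coeff r j i))) m) G"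
      using smult_sum[OF M2 finite_G basis_mult_emb_carrier m] by (simp add: mult_basis_eq[OF r i])
  next
    fix r j z assume r: "r \<in> carrier S" and j: "j \<in> G" and z: "z \<in> carrier M3"
    show "smult M3 (mult S (dual j) r) z =
      finsum M3 (\<lambda>i. smult M3 (mult S (emb (transfer_coeff r j i)) (dual i)) z) G"
      using smult_sum[OF M3 finite_G emb_mult_dual_carrier z] by (simp add: dual_mult_eq[OF r j])
  qed
  show ?thesis by (rule avg_splits)
qed

lemma semisimple_ext: "semisimple_ext_at S (range emb) M1 M2 M3 f p"
  unfolding semisimple_ext_at_def
proof (intro impI, elim conjE)
  assume exact: "short_exact S M1 M2 M3 f p" and "splits_wrt (range emb) M2 M3 p"
  then obtain h where "lin_map (range emb) M3 M2 h" "\<forall>z\<in>carrier M3. p (h z) = z"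
    unfolding splits_wrt_def by blast
  with exact show "splits_wrt (carrier S) M2 M3 p"
    unfolding short_exact_def by (intro splits_of_emb_splits) auto
qed

end

theorem corollary3p6:
  fixes G :: "'g set" and s t gi :: "'g \<Rightarrow> 'g" and cmp :: "'g \<Rightarrow> 'g \<Rightarrow> 'g"
    and u :: "'g \<Rightarrow> 'a::ring_1" and \<alpha> :: "'g \<Rightarrow> 'a \<Rightarrow> 'a"
  assumes "finite G"
    and "groupoid G s t cmp gi"
    and "connected_groupoid G s t"
    and "direct_sum_objs G s u"
    and "unital_partial_action G s t cmp gi u \<alpha>"
    and "\<exists>a. (\<forall>b. a * b = b * a) \<and> (\<forall>e\<in>objs G s. trace_j G s t gi u \<alpha> e a = u e)"
  shows "\<forall>(M1 :: ('g \<Rightarrow> 'a, 'm1) module) (M2 :: ('g \<Rightarrow> 'a, 'm2) module)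
            (M3 :: ('g \<Rightarrow> 'a, 'm3) module) f g.
           semisimple_ext_at (skew_ring G s t cmp gi u \<alpha>) (range (skew_emb G s u))
             M1 M2 M3 f g"
proof -
  obtain a where a: "\<forall>b. a * b = b * a" "\<forall>e\<in>objs G s. trace_j G s t gi u \<alpha> e a = u e"
    using assms(6) by blast
  interpret trace_one G s t cmp gi u \<alpha> a
  proof
    show "groupoid G s t cmp gi" "unital_partial_action G s t cmp gi u \<alpha>" "finite G" by fact+
    show "a * b = b * a" for b using a(1) by blast
    show "e \<in> objs G s \<Longrightarrow> trace_j G s t gi u \<alpha> e a = u e" for e using a(2) by blast
  qed
  show ?thesis using semisimple_ext by blast
qed

end
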